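(* Let $n>5f$ and consider an execution of the convergence algorithm described in the context, with at most $f$ Byzantine robots. Let $U(t)$ be the multiset of positions of the correct robots at time $t$. For every correct robot $i$ and every time $t$, $$range\big(trim^i_{2f}(P(t))\big) \subseteq range(U(t)),$$ where $range(S)=[\min S,\max S]$.
   Context: Setting: $n$ robots on the real line, of which at most $f$ are Byzantine (arbitrary positions) and $m\ge n-f$ are correct. Robots are anonymous, oblivious, have no common orientation, and have unlimited visibility with strong multiplicity detection. They operate in Look–Compute–Move cycles. Notation: $P(t)$ is the multiset of all $n$ positions at time $t$, sorted $P_1(t)\le\dots\le P_n(t)$. Let $x_i$ be the position of robot $i$. $trim^i_{2f}(P(t))$ is the multiset obtained from $P(t)$ by removing, among the $2f$ smallest positions, those strictly smaller than $x_i$, and, among the $2f$ largest positions, those strictly larger than $x_i$. Its minimum is $\min(x_i,P_{2f+1}(t))$ and its maximum is $\max(x_i,P_{n-2f}(t))$. The algorithm: robot $i$, after observing $P(t)$, is elected iff $x_i\le P_{f+1}(t)$ or $x_i\ge P_{n-f}(t)$. If elected, it moves toward the midpoint of $\min$ and $\max$ of $trim^i_{2f}(P(t))$; otherwise it does not move. *)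

theory Defs
  imports Complex_Main "HOL-Library.Multiset"
begin

definition positions :: "nat \<Rightarrow> (nat \<Rightarrow> real) \<Rightarrow> real multiset" where
  "positions n x = image_mset x (mset_set {0..<n})"

definition trim :: "nat \<Rightarrow> real \<Rightarrow> real multiset \<Rightarrow> real multiset" where
  "trim f xi P = (let xs = sorted_list_of_multiset P; N = length xs in
     mset (map (\<lambda>j. xs ! j)
       (filter (\<lambda>j. \<not> (j < 2*f \<and> xs ! j < xi) \<and> \<not> (N - 2*f \<le> j \<and> xs ! j > xi)) [0..<N])))"

definition range_ms :: "real multiset \<Rightarrow> real set" where
  "range_ms S = {Min (set_mset S) .. Max (set_mset S)}"

end

theory Submission
  imports Defs
begin

text \<open>Only the at most f faulty robots can lie strictly below the smallest correct
  position m.  Hence in the sorted configuration every entry of index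
  \<open>\<ge> 2f\<close> is at least m, while the entries among the 2f smallest that survive the trim are
  at least \<open>x\<^sub>i \<ge> m\<close>.  Symmetrically every surviving entry is at most the largest correct
  position, and \<open>x\<^sub>i\<close> itself survives, so the trimmed multiset is nonempty.\<close>

lemma sorted_nth_ge_if_few_below:
  fixes xs :: "'a::linorder list"
  assumes "sorted xs" "j < length xs" "length (filter (\<lambda>v. v < m) xs) \<le> j"
  shows "m \<le> xs ! j"
proof (rule ccontr)
  assume "\<not> m \<le> xs ! j"
  then have "xs ! k < m" if "k \<le> j" for k
    using that assms(1,2) sorted_nth_mono[of xs k j] by simp
  then have "\<forall>v\<in>set (take (Suc j) xs). v < m"
    by (auto simp: in_set_conv_nth)
  then have "Suc j = length (filter (\<lambda>v. v < m) (take (Suc j) xs))"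
    using assms(2) by simp
  also have "\<dots> \<le> length (filter (\<lambda>v. v < m) xs)"
    by (metis append_take_drop_id filter_append length_append le_add1)
  finally show False using assms(3) by simp
qed

lemma sorted_nth_le_if_few_above:
  fixes xs :: "'a::linorder list"
  assumes "sorted xs" "j + length (filter (\<lambda>v. M < v) xs) < length xs"
  shows "xs ! j \<le> M"
proof (rule ccontr)
  assume "\<not> xs ! j \<le> M"
  then have "M < xs ! k" if "j \<le> k" "k < length xs" for k
    using that assms(1) sorted_nth_mono[of xs j k] by simp
  then have "\<forall>v\<in>set (drop j xs). M < v"
    by (auto simp: in_set_conv_nth)
  then have "length xs - j = length (filter (\<lambda>v. M < v) (drop j xs))"
    by simp
  also have "\<dots> \<le> length (filter (\<lambda>v. M < v) xs)"
    by (metis append_take_drop_id filter_append length_append le_add2)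
  finally show False using assms(2) by simp
qed

lemma length_filter_sorted_list_of_multiset:
  "length (filter P (sorted_list_of_multiset M)) = size (filter_mset P M)"
  by (metis mset_filter mset_sorted_list_of_multiset size_mset)

lemma trim_memberE:
  assumes "v \<in># trim f xi P"
  obtains j where "j < size P" "v = sorted_list_of_multiset P ! j"
    "2 * f \<le> j \<or> xi \<le> v" "j + 2 * f < size P \<or> v \<le> xi"
proof -
  define xs where "xs = sorted_list_of_multiset P"
  have len: "length xs = size P"
    unfolding xs_def by (metis mset_sorted_list_of_multiset size_mset)
  from assms obtain j where "j < length xs" "v = xs ! j"
    "\<not> (j < 2 * f \<and> xs ! j < xi)" "\<not> (length xs - 2 * f \<le> j \<and> xs ! j > xi)"
    unfolding trim_def Let_def xs_def[symmetric] by auto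
  with len show thesis
    by (intro that[of j]) (auto simp: xs_def)
qed

lemma self_in_trim:
  assumes "xi \<in># P"
  shows "xi \<in># trim f xi P"
proof -
  define xs where "xs = sorted_list_of_multiset P"
  have "xi \<in> set xs" using assms by (simp add: xs_def)
  then obtain j where "j < length xs" "xs ! j = xi" by (metis in_set_conv_nth)
  then show ?thesis
    unfolding trim_def Let_def xs_def[symmetric] by force
qed

lemma trim_lower_bound:
  fixes P :: "real multiset"
  assumes "m \<le> xi" "size (filter_mset (\<lambda>v. v < m) P) \<le> 2 * f" "v \<in># trim f xi P"
  shows "m \<le> v"
proof -
  obtain j where j: "j < size P" "v = sorted_list_of_multiset P ! j" "2 * f \<le> j \<or> xi \<le> v"
    using assms(3) by (rule trim_memberE)
  show ?thesis
  proof (cases "2 * f \<le> j")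
    case True
    then show ?thesis
      using j assms(2)
      by (auto intro!: sorted_nth_ge_if_few_below
          simp: length_filter_sorted_list_of_multiset
          simp flip: size_mset[of "sorted_list_of_multiset P"])
  next
    case False
    with j assms(1) show ?thesis by auto
  qed
qed

lemma trim_upper_bound:
  fixes P :: "real multiset"
  assumes "xi \<le> M" "size (filter_mset (\<lambda>v. M < v) P) \<le> 2 * f" "v \<in># trim f xi P"
  shows "v \<le> M"
proof -
  obtain j where j: "j < size P" "v = sorted_list_of_multiset P ! j"
      "j + 2 * f < size P \<or> v \<le> xi"
    using assms(3) by (rule trim_memberE)
  show ?thesis
  proof (cases "j + 2 * f < size P")
    case True
    then show ?thesis
      using j assms(2)
      by (auto intro!: sorted_nth_le_if_few_above
          simp: length_filter_sorted_list_of_multiset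
          simp flip: size_mset[of "sorted_list_of_multiset P"])
  next
    case False
    with j assms(1) show ?thesis by auto
  qed
qed

lemma size_filter_positions_le:
  assumes "C \<subseteq> {0..<n}" "\<forall>k\<in>C. \<not> Q (x k)"
  shows "size (filter_mset Q (positions n x)) \<le> n - card C"
proof -
  have "size (filter_mset Q (positions n x)) = card {k\<in>{0..<n}. Q (x k)}"
    by (simp add: positions_def filter_mset_image_mset)
  also have "\<dots> \<le> card ({0..<n} - C)"
    using assms by (intro card_mono) auto
  also have "\<dots> = n - card C"
    using assms(1) by (simp add: card_Diff_subset finite_subset)
  finally show ?thesis .
qed

lemma range_ms_subset:
  assumes "S \<noteq> {#}" "\<And>v. v \<in># S \<Longrightarrow> Min (set_mset T) \<le> v \<and> v \<le> Max (set_mset T)"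
  shows "range_ms S \<subseteq> range_ms T"
proof -
  have "Min (set_mset T) \<le> Min (set_mset S)" "Max (set_mset S) \<le> Max (set_mset T)"
    using assms by (simp_all add: Min_in Max_in)
  then show ?thesis
    unfolding range_ms_def by auto
qed

theorem lemma6:
  fixes n f :: nat and C :: "nat set" and pos :: "real \<Rightarrow> nat \<Rightarrow> real"
    and i :: nat and t :: real
  assumes "n > 5 * f"
    and "C \<subseteq> {0..<n}"
    and "card C \<ge> n - f"
    and "i \<in> C"
  shows "range_ms (trim f (pos t i) (positions n (pos t)))
           \<subseteq> range_ms (image_mset (pos t) (mset_set C))"
proof -
  have finC: "finite C" using assms(2) finite_subset by blast
  define m where "m = Min (pos t ` C)"
  define M where "M = Max (pos t ` C)"
  have bounds: "m \<le> pos t k" "pos t k \<le> M" if "k \<in> C" for k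
    using that finC by (simp_all add: m_def M_def)
  have below: "size (filter_mset (\<lambda>v. v < m) (positions n (pos t))) \<le> 2 * f"
    using size_filter_positions_le[OF assms(2), where Q = "\<lambda>v. v < m" and x = "pos t"]
      bounds assms(3) by fastforce
  have above: "size (filter_mset (\<lambda>v. M < v) (positions n (pos t))) \<le> 2 * f"
    using size_filter_positions_le[OF assms(2), where Q = "\<lambda>v. M < v" and x = "pos t"]
      bounds assms(3) by fastforce
  have "pos t i \<in># trim f (pos t i) (positions n (pos t))"
    using assms(2,4) by (intro self_in_trim) (auto simp: positions_def)
  then show ?thesis
    using finC trim_lower_bound[OF bounds(1)[OF assms(4)] below]
      trim_upper_bound[OF bounds(2)[OF assms(4)] above]
    by (intro range_ms_subset) (auto simp: m_def M_def)
qed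

end
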